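(* Let $R$ be a commutative ring with identity, let $\boldsymbol{u}=(u_0,u_1,\dots)\in H_R$, and let $q(x)=\tau(x\boldsymbol{u})=(q_n(x))_{n\ge0}$, with $q_0(x)=1$ and $q_n(x)=\sum_{i=1}^nc_{i,n}x^i$ for $n\ge1$. Then $u_0=c_{1,1}$ and for every $m\ge2$, $$u_{m-1}=c_{1,m}+\sum_{\substack{k\mid m\\ k\neq1,m}}\frac{(-1)^{m/k}\,m!}{\frac{m}{k}\,(k!)^{m/k}}\,u_{k-1}.$$ In particular $u_{p-1}=c_{1,p}$ for every prime $p$.
   Context: $H_S$: sequences in a commutative ring $S$; $U_S$: those with first term $1$, a group under the Hurwitz product $(\boldsymbol{a}\star\boldsymbol{b})_n=\sum_{h=0}^n\binom{n}{h}a_hb_{n-h}$. Powers: for $\boldsymbol a=(1,a_1,\dots)\in U_S$ and $z\in S$, $\boldsymbol a^z[n]=\sum_{k=0}^nY_{n,k}(a_1,\dots,a_{n-k+1})\,z(z-1)\cdots(z-k+1)$ with $Y_{n,k}(y_1,y_2,\dots)=\sum\frac{n!}{\prod_l j_l!(l!)^{j_l}}\prod_ly_l^{j_l}$ over nonnegative $(j_l)$, $\sum j_l=k$, $\sum lj_l=n$ ($Y_{0,0}=1$, $Y_{n,0}=0$ for $n\ge1$); over $\mathbb Q$-algebras this is the sequence with e.g.f. $A(t)^z$. $\boldsymbol{b}^{(1)}=(1,1,1,\dots)$; for $i\ge2$, $\boldsymbol{b}^{(i)}$ has entries $1$ at positions $0$ and $i$, $0$ elsewhere. For $\boldsymbol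 z\in H_S$, $\tau(\boldsymbol z)\in U_S$ is the sequence whose first $n$ terms, for each $n\ge2$, are those of $(\boldsymbol{b}^{(1)})^{z_0}\star\cdots\star(\boldsymbol{b}^{(n-1)})^{z_{n-2}}$. Here $S=R[x]$ and $x\boldsymbol u=(xu_0,xu_1,\dots)$. *)

theory Defs
  imports "HOL-Computational_Algebra.Polynomial" "HOL-Computational_Algebra.Primes"
begin

definition hurwitz_prod :: "(nat \<Rightarrow> 'a::comm_ring_1) \<Rightarrow> (nat \<Rightarrow> 'a) \<Rightarrow> nat \<Rightarrow> 'a" where
  "hurwitz_prod a b n = (\<Sum>h\<le>n. of_nat (n choose h) * a h * b (n - h))"

definition hurwitz_one :: "nat \<Rightarrow> 'a::comm_ring_1" where
  "hurwitz_one n = (if n = 0 then 1 else 0)"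

definition hurwitz_prod_list :: "(nat \<Rightarrow> 'a::comm_ring_1) list \<Rightarrow> nat \<Rightarrow> 'a" where
  "hurwitz_prod_list xs = foldr hurwitz_prod xs hurwitz_one"

text \<open>Partial Bell polynomial Y_{n,k}(y_1,y_2,...), the sum ranging over
  nonnegative (j_l)_{l\<ge>1} with sum j_l = k and sum l j_l = n (so j_l = 0 for l > n).\<close>
definition bell_tuples :: "nat \<Rightarrow> nat \<Rightarrow> (nat \<Rightarrow> nat) set" where
  "bell_tuples n k = {j. (\<forall>l. l \<notin> {1..n} \<longrightarrow> j l = 0)
       \<and> (\<Sum>l\<in>{1..n}. j l) = k \<and> (\<Sum>l\<in>{1..n}. l * j l) = n}"

definition partial_bell :: "nat \<Rightarrow> nat \<Rightarrow> (nat \<Rightarrow> 'a::comm_ring_1) \<Rightarrow> 'a" where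
  "partial_bell n k y = (\<Sum>j\<in>bell_tuples n k.
      of_nat (fact n div (\<Prod>l\<in>{1..n}. fact (j l) * fact l ^ j l)) * (\<Prod>l\<in>{1..n}. y l ^ j l))"

text \<open>Power a^z of a sequence a = (1,a_1,...) in U_S, for z in S.\<close>
definition hurwitz_pow :: "(nat \<Rightarrow> 'a::comm_ring_1) \<Rightarrow> 'a \<Rightarrow> nat \<Rightarrow> 'a" where
  "hurwitz_pow a z n = (\<Sum>k\<le>n. partial_bell n k a * (\<Prod>i<k. z - of_nat i))"

definition bseq :: "nat \<Rightarrow> nat \<Rightarrow> 'a::comm_ring_1" where
  "bseq i n = (if i = 1 then 1 else if n = 0 \<or> n = i then 1 else 0)"

definition tau_partial :: "(nat \<Rightarrow> 'a::comm_ring_1) \<Rightarrow> nat \<Rightarrow> nat \<Rightarrow> 'a" where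
  "tau_partial z N = hurwitz_prod_list (map (\<lambda>i. hurwitz_pow (bseq i) (z (i - 1))) [1..<N+1])"

text \<open>tau(z): for each n \<ge> 2 its first n terms are those of P_{n-1}. The m-th term is
  read off from P_{n-1} with n = max 2 (m+1), i.e. from P_{max 1 m}.\<close>
definition tau :: "(nat \<Rightarrow> 'a::comm_ring_1) \<Rightarrow> nat \<Rightarrow> 'a" where
  "tau z m = tau_partial z (max 1 m) m"

definition xseq :: "(nat \<Rightarrow> 'a::comm_ring_1) \<Rightarrow> nat \<Rightarrow> 'a poly" where
  "xseq u n = [:0, 1:] * [:u n:]"

end

theory Submission
  imports Defs "HOL-Library.FuncSet"
begin

text \<open>
  Only the constant and linear coefficients in \<open>x\<close> matter. Each factor
  \<open>(b\<^sup>(\<^sup>i\<^sup>))\<^sup>x\<^sup>u\<close> with \<open>u = u\<^sub>i\<^sub>-\<^sub>1\<close> has the Hurwitz identity as constant part,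
  so the linear coefficient of their Hurwitz product is the sum of the linear coefficients of
  the factors. Since \<open>Y\<^sub>n\<^sub>,\<^sub>k(1, 1, \<dots>)\<close> are the Stirling numbers of the second kind,
  \<open>(b\<^sup>(\<^sup>1\<^sup>))\<^sup>z[n] = z\<^sup>n\<close>, which contributes \<open>u\<^sub>0\<close> for \<open>m = 1\<close> and nothing otherwise.
  For \<open>i \<ge> 2\<close>, \<open>Y\<^sub>n\<^sub>,\<^sub>k(b\<^sup>(\<^sup>i\<^sup>))\<close> vanishes unless \<open>n = i k\<close>, where it is \<open>n! / (k! (i!)\<^sup>k)\<close>,
  and the linear coefficient of the falling factorial \<open>x u (x u - 1) \<cdots> (x u - k + 1)\<close> is
  \<open>(-1)\<^bsup>k-1\<^esup> (k-1)! u\<close>. Hence only the divisors \<open>i\<close> of \<open>m\<close> contribute, and the divisor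
  \<open>i = m\<close> contributes exactly \<open>u\<^sub>m\<^sub>-\<^sub>1\<close>.
\<close>

lemma coeff_mult_1:
  "coeff (p * q) 1 = coeff p 0 * coeff q 1 + coeff p 1 * coeff (q :: 'a::comm_ring_1 poly) 0"
  by (simp add: coeff_mult)

lemma of_nat_mult_poly: "of_nat c * p = smult (of_nat c) (p :: 'a::comm_ring_1 poly)"
  by (simp add: of_nat_poly)

lemma hurwitz_prod_coeff_0:
  fixes a b :: "nat \<Rightarrow> 'a::comm_ring_1 poly"
  assumes "\<And>n. coeff (a n) 0 = hurwitz_one n" and "\<And>n. coeff (b n) 0 = hurwitz_one n"
  shows "coeff (hurwitz_prod a b n) 0 = hurwitz_one n"
proof -
  have "coeff (hurwitz_prod a b n) 0 = (\<Sum>h\<le>n. of_nat (n choose h) * (hurwitz_one h * hurwitz_one (n - h)))"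
    unfolding hurwitz_prod_def coeff_sum
    by (intro sum.cong) (simp_all add: of_nat_mult_poly assms coeff_mult_0)
  also have "\<dots> = (\<Sum>h\<le>n. if h = 0 then hurwitz_one n else 0)"
    by (intro sum.cong) (auto simp: hurwitz_one_def)
  finally show ?thesis by simp
qed

lemma hurwitz_prod_coeff_1:
  fixes a b :: "nat \<Rightarrow> 'a::comm_ring_1 poly"
  assumes "\<And>n. coeff (a n) 0 = hurwitz_one n" and "\<And>n. coeff (b n) 0 = hurwitz_one n"
  shows "coeff (hurwitz_prod a b n) 1 = coeff (a n) 1 + coeff (b n) 1"
proof -
  have "coeff (hurwitz_prod a b n) 1 = (\<Sum>h\<le>n. of_nat (n choose h) * (hurwitz_one h * coeff (b (n - h)) 1)
        + of_nat (n choose h) * (coeff (a h) 1 * hurwitz_one (n - h)))"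
    unfolding hurwitz_prod_def coeff_sum
    by (intro sum.cong) (simp_all add: of_nat_mult_poly coeff_mult_1[simplified] assms distrib_left)
  also have "\<dots> = (\<Sum>h\<le>n. if h = 0 then coeff (b n) 1 else 0) + (\<Sum>h\<le>n. if h = n then coeff (a n) 1 else 0)"
    unfolding sum.distrib[symmetric] by (intro sum.cong) (auto simp: hurwitz_one_def)
  finally show ?thesis by simp
qed

lemma hurwitz_prod_list_Cons: "hurwitz_prod_list (a # as) = hurwitz_prod a (hurwitz_prod_list as)"
  by (simp add: hurwitz_prod_list_def)

lemma hurwitz_prod_list_coeff_0:
  fixes as :: "(nat \<Rightarrow> 'a::comm_ring_1 poly) list"
  assumes "\<And>a n. a \<in> set as \<Longrightarrow> coeff (a n) 0 = hurwitz_one n"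
  shows "coeff (hurwitz_prod_list as n) 0 = hurwitz_one n"
  using assms
  by (induction as arbitrary: n)
     (simp_all add: hurwitz_prod_list_def hurwitz_one_def hurwitz_prod_coeff_0)

lemma hurwitz_prod_list_coeff_1:
  fixes as :: "(nat \<Rightarrow> 'a::comm_ring_1 poly) list"
  assumes "\<And>a n. a \<in> set as \<Longrightarrow> coeff (a n) 0 = hurwitz_one n"
  shows "coeff (hurwitz_prod_list as n) 1 = (\<Sum>a\<leftarrow>as. coeff (a n) 1)"
  using assms
proof (induction as arbitrary: n)
  case Nil
  then show ?case by (simp add: hurwitz_prod_list_def hurwitz_one_def)
next
  case (Cons a as)
  have "coeff (a n) 0 = hurwitz_one n" "coeff (hurwitz_prod_list as n) 0 = hurwitz_one n" for n
    using Cons.prems by (simp_all add: hurwitz_prod_list_coeff_0)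
  then show ?case
    using Cons by (simp add: hurwitz_prod_list_Cons hurwitz_prod_coeff_1 del: One_nat_def)
qed

lemma sum_indep_of_range:
  fixes g :: "nat \<Rightarrow> 'b::comm_monoid_add"
  assumes "\<And>l. j l = 0 \<Longrightarrow> g l = 0" and "\<forall>l. l \<notin> {1..min M N} \<longrightarrow> j l = 0"
  shows "sum g {1..M} = sum g {1..N}"
proof -
  have "sum g {1..M} = sum g {1..min M N}"
    by (rule sum.mono_neutral_right) (use assms in auto)
  also have "\<dots> = sum g {1..N}"
    by (rule sum.mono_neutral_left) (use assms in auto)
  finally show ?thesis .
qed

lemma prod_indep_of_range:
  fixes g :: "nat \<Rightarrow> 'b::comm_monoid_mult"
  assumes "\<And>l. j l = 0 \<Longrightarrow> g l = 1" and "\<forall>l. l \<notin> {1..min M N} \<longrightarrow> j l = 0"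
  shows "prod g {1..M} = prod g {1..N}"
proof -
  have "prod g {1..M} = prod g {1..min M N}"
    by (rule prod.mono_neutral_right) (use assms in auto)
  also have "\<dots> = prod g {1..N}"
    by (rule prod.mono_neutral_left) (use assms in auto)
  finally show ?thesis .
qed

lemma sum_fun_upd:
  fixes h :: "'c \<Rightarrow> 'd \<Rightarrow> 'b::comm_monoid_add"
  assumes "finite A" "l \<in> A"
  shows "(\<Sum>x\<in>A. h x ((g(l := v)) x)) + h l (g l) = (\<Sum>x\<in>A. h x (g x)) + h l v"
proof -
  have "(\<Sum>x\<in>A-{l}. h x ((g(l := v)) x)) = (\<Sum>x\<in>A-{l}. h x (g x))"
    by (rule sum.cong) auto
  then show ?thesis using assms by (simp add: sum.remove ac_simps)
qed

lemma prod_fun_upd: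
  fixes h :: "'c \<Rightarrow> 'd \<Rightarrow> 'b::comm_monoid_mult"
  assumes "finite A" "l \<in> A"
  shows "(\<Prod>x\<in>A. h x ((g(l := v)) x)) * h l (g l) = (\<Prod>x\<in>A. h x (g x)) * h l v"
proof -
  have "(\<Prod>x\<in>A-{l}. h x ((g(l := v)) x)) = (\<Prod>x\<in>A-{l}. h x (g x))"
    by (rule prod.cong) auto
  then show ?thesis using assms by (simp add: prod.remove ac_simps)
qed

lemma bell_tuples_support: "j \<in> bell_tuples n k \<Longrightarrow> l \<notin> {1..n} \<Longrightarrow> j l = 0"
  by (simp add: bell_tuples_def)

lemma finite_bell_tuples: "finite (bell_tuples n k)"
proof -
  let ?ext = "\<lambda>f l. if l \<in> {1..n} then f l else (0::nat)"
  have "bell_tuples n k \<subseteq> ?ext ` (PiE {1..n} (\<lambda>_. {0..k}))"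
  proof
    fix j assume j: "j \<in> bell_tuples n k"
    have "j l \<le> k" if "l \<in> {1..n}" for l
    proof -
      have "j l \<le> (\<Sum>l\<in>{1..n}. j l)" by (rule member_le_sum) (use that in auto)
      then show ?thesis using j by (simp add: bell_tuples_def)
    qed
    then have "restrict j {1..n} \<in> PiE {1..n} (\<lambda>_. {0..k})" by auto
    moreover have "j = ?ext (restrict j {1..n})"
      using bell_tuples_support[OF j] by (auto simp: fun_eq_iff)
    ultimately show "j \<in> ?ext ` (PiE {1..n} (\<lambda>_. {0..k}))" by blast
  qed
  then show ?thesis by (rule finite_subset) (intro finite_imageI finite_PiE; simp)
qed

lemma mem_bell_tuples_iff:
  assumes supp: "\<forall>l. l \<notin> {1..M} \<longrightarrow> j l = 0"
  shows "j \<in> bell_tuples n k \<longleftrightarrow> (\<Sum>l\<in>{1..M}. j l) = k \<and> (\<Sum>l\<in>{1..M}. l * j l) = n"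
proof
  assume j: "j \<in> bell_tuples n k"
  have supp': "\<forall>l. l \<notin> {1..min M n} \<longrightarrow> j l = 0"
    using supp bell_tuples_support[OF j] by auto
  have "(\<Sum>l\<in>{1..M}. j l) = (\<Sum>l\<in>{1..n}. j l)" "(\<Sum>l\<in>{1..M}. l * j l) = (\<Sum>l\<in>{1..n}. l * j l)"
    by (rule sum_indep_of_range[OF _ supp'], simp)+
  then show "(\<Sum>l\<in>{1..M}. j l) = k \<and> (\<Sum>l\<in>{1..M}. l * j l) = n"
    using j unfolding bell_tuples_def by simp
next
  assume sums: "(\<Sum>l\<in>{1..M}. j l) = k \<and> (\<Sum>l\<in>{1..M}. l * j l) = n"
  have "l \<le> n" if "j l \<noteq> 0" for l
  proof -
    have "l \<in> {1..M}" using supp that by auto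
    then have "l * j l \<le> (\<Sum>l\<in>{1..M}. l * j l)" by (intro member_le_sum) auto
    moreover have "l \<le> l * j l" using that by simp
    ultimately show ?thesis using sums by linarith
  qed
  then have supp': "\<forall>l. l \<notin> {1..min M n} \<longrightarrow> j l = 0"
    using supp by (metis atLeastAtMost_iff min.bounded_iff)
  have "(\<Sum>l\<in>{1..M}. j l) = (\<Sum>l\<in>{1..n}. j l)" "(\<Sum>l\<in>{1..M}. l * j l) = (\<Sum>l\<in>{1..n}. l * j l)"
    by (rule sum_indep_of_range[OF _ supp'], simp)+
  then show "j \<in> bell_tuples n k"
    using sums supp' unfolding bell_tuples_def by auto
qed

lemma bell_tuples_0: "bell_tuples n 0 = (if n = 0 then {\<lambda>_. 0} else {})"
proof -
  have "j = (\<lambda>_. 0)" if "j \<in> bell_tuples n 0" for j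
  proof
    fix l show "j l = 0"
      using that bell_tuples_support[OF that, of l] by (cases "l \<in> {1..n}") (auto simp: bell_tuples_def)
  qed
  moreover have "(\<lambda>_. 0) \<in> bell_tuples n 0 \<longleftrightarrow> n = 0" by (auto simp: bell_tuples_def)
  ultimately show ?thesis by auto
qed

lemma bell_tuples_eq_empty: "n < k \<Longrightarrow> bell_tuples n k = {}"
proof (rule ccontr)
  assume "n < k" and "bell_tuples n k \<noteq> {}"
  then obtain j where j: "j \<in> bell_tuples n k" by blast
  have "(\<Sum>l\<in>{1..n}. j l) \<le> (\<Sum>l\<in>{1..n}. l * j l)" by (rule sum_mono) simp
  then show False using j \<open>n < k\<close> by (simp add: bell_tuples_def)
qed

definition bell_denom :: "nat \<Rightarrow> (nat \<Rightarrow> nat) \<Rightarrow> nat" where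
  "bell_denom N j = (\<Prod>l\<in>{1..N}. fact (j l) * fact l ^ j l)"

lemma bell_denom_pos: "bell_denom N j > 0"
  unfolding bell_denom_def by (intro prod_pos) simp

lemma bell_denom_indep_of_range:
  "\<forall>l. l \<notin> {1..min M N} \<longrightarrow> j l = 0 \<Longrightarrow> bell_denom M j = bell_denom N j"
  unfolding bell_denom_def by (rule prod_indep_of_range[of j]) simp_all

lemma bell_denom_fun_upd:
  "l \<in> {1..N} \<Longrightarrow>
   bell_denom N (j(l := v)) * (fact (j l) * fact l ^ j l) = bell_denom N j * (fact v * fact l ^ v)"
  unfolding bell_denom_def using prod_fun_upd[of "{1..N}" l "\<lambda>x y. fact y * fact x ^ y" j v] by simp

lemma fact_mult_pow_dvd_fact:
  assumes "l \<ge> 1"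
  shows "fact r * fact l ^ r dvd (fact (r * l) :: nat)"
proof (induction r)
  case 0
  then show ?case by simp
next
  case (Suc r)
  define N where "N = Suc r * l"
  obtain l' where l': "l = Suc l'" using assms by (cases l) auto
  define C where "C = (N - 1) choose l'"
  have "l * (N choose l) = N * C"
    using binomial_absorption[of l' N] by (simp only: l' C_def)
  also have "\<dots> = l * (Suc r * C)"
    by (simp add: N_def algebra_simps)
  finally have "l * (N choose l) = l * (Suc r * C)" .
  then have choose: "N choose l = Suc r * C" using assms by simp
  have "fact N = fact (r * l) * fact l * (N choose l)"
    using binomial_fact_lemma[of l N] by (simp add: N_def mult_ac)
  also have "\<dots> = fact (r * l) * (fact l * Suc r) * C"
    by (simp add: choose algebra_simps)
  finally have fact_N: "fact N = fact (r * l) * (fact l * Suc r) * C" .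
  have "fact (Suc r) * fact l ^ Suc r = (fact r * fact l ^ r) * (fact l * Suc r :: nat)"
    by (simp add: algebra_simps)
  also have "\<dots> dvd fact (r * l) * (fact l * Suc r)"
    using Suc.IH by (rule mult_dvd_mono) simp
  also have "\<dots> dvd fact N"
    unfolding fact_N by simp
  finally show ?case by (simp only: N_def)
qed

text \<open>Removing all \<open>j\<^sub>l\<close> blocks of size \<open>l\<close> at once splits \<open>n!\<close> as \<open>(n - j\<^sub>l l)! (j\<^sub>l l)!\<close>
  times a binomial coefficient.\<close>
lemma bell_denom_dvd_fact: "j \<in> bell_tuples n k \<Longrightarrow> bell_denom n j dvd fact n"
proof (induction n arbitrary: j k rule: less_induct)
  case (less n)
  note j = less.prems
  show ?case
  proof (cases "\<forall>l. j l = 0")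
    case True
    then show ?thesis by (simp add: bell_denom_def)
  next
    case False
    then obtain l where jl: "j l \<noteq> 0" by blast
    have l: "l \<in> {1..n}" using bell_tuples_support[OF j, of l] jl by blast
    define r where "r = j l"
    define j' where "j' = j(l := 0)"
    have sums: "(\<Sum>x\<in>{1..n}. j x) = k" "(\<Sum>x\<in>{1..n}. x * j x) = n"
      using j by (auto simp: bell_tuples_def)
    have "(\<Sum>x\<in>{1..n}. j' x) + r = k"
      using sum_fun_upd[of "{1..n}" l "\<lambda>x y. y" j 0] l sums by (simp add: j'_def r_def)
    moreover have "(\<Sum>x\<in>{1..n}. x * j' x) + r * l = n"
      using sum_fun_upd[of "{1..n}" l "\<lambda>x y. x * y" j 0] l sums by (simp add: j'_def r_def mult.commute)
    moreover have supp': "\<forall>x. x \<notin> {1..n} \<longrightarrow> j' x = 0"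
      using bell_tuples_support[OF j] by (simp add: j'_def)
    ultimately have j': "j' \<in> bell_tuples (n - r * l) (k - r)"
      using mem_bell_tuples_iff[OF supp'] by auto
    have rl: "0 < r * l" "r * l \<le> n"
      using jl l \<open>(\<Sum>x\<in>{1..n}. x * j' x) + r * l = n\<close> by (auto simp: r_def)
    have "n - r * l < n" using rl by linarith
    then have IH: "bell_denom (n - r * l) j' dvd fact (n - r * l)"
      using less.IH j' by blast
    have "bell_denom n j' = bell_denom (n - r * l) j'"
      using bell_tuples_support[OF j'] by (intro bell_denom_indep_of_range) auto
    moreover have "bell_denom n j' * (fact r * fact l ^ r) = bell_denom n j"
      using bell_denom_fun_upd[OF l, of j 0] by (simp add: j'_def r_def)
    ultimately have "bell_denom n j = bell_denom (n - r * l) j' * (fact r * fact l ^ r)"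
      by simp
    then have "bell_denom n j dvd fact (n - r * l) * fact (r * l)"
      using mult_dvd_mono[OF IH fact_mult_pow_dvd_fact[of l r]] l by simp
    also have "\<dots> dvd fact n"
      using binomial_fact_lemma[OF rl(2)] by (metis dvd_triv_left mult.commute)
    finally show ?thesis .
  qed
qed

lemma bell_tuples_fun_upd_Suc:
  assumes l: "l \<ge> 1" and j: "j \<in> bell_tuples m k"
  shows "j(l := Suc (j l)) \<in> bell_tuples (m + l) (Suc k)"
proof -
  have fin: "finite {1..m + l}" and l_in: "l \<in> {1..m + l}" using l by auto
  have supp: "\<forall>x. x \<notin> {1..m + l} \<longrightarrow> j x = 0"
    using bell_tuples_support[OF j] by auto
  then have sums: "(\<Sum>x\<in>{1..m + l}. j x) = k" "(\<Sum>x\<in>{1..m + l}. x * j x) = m"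
    using mem_bell_tuples_iff j by blast+
  have "(\<Sum>x\<in>{1..m + l}. (j(l := Suc (j l))) x) = Suc k"
    using sum_fun_upd[OF fin l_in, of "\<lambda>x y. y" j "Suc (j l)"] sums by simp
  moreover have "(\<Sum>x\<in>{1..m + l}. x * (j(l := Suc (j l))) x) = m + l"
    using sum_fun_upd[OF fin l_in, of "\<lambda>x y. x * y" j "Suc (j l)"] sums by simp
  moreover have "\<forall>x. x \<notin> {1..m + l} \<longrightarrow> (j(l := Suc (j l))) x = 0"
    using supp l_in by auto
  ultimately show ?thesis using mem_bell_tuples_iff by blast
qed

lemma bell_tuples_fun_upd_pred:
  assumes j: "j \<in> bell_tuples n k" and jl: "j l \<noteq> 0"
  shows "j(l := j l - 1) \<in> bell_tuples (n - l) (k - 1)"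
proof -
  have fin: "finite {1..n}" by simp
  have l_in: "l \<in> {1..n}" using bell_tuples_support[OF j, of l] jl by blast
  have supp: "\<forall>x. x \<notin> {1..n} \<longrightarrow> j x = 0"
    using bell_tuples_support[OF j] by auto
  have sums: "(\<Sum>x\<in>{1..n}. j x) = k" "(\<Sum>x\<in>{1..n}. x * j x) = n"
    using j by (auto simp: bell_tuples_def)
  have "(\<Sum>x\<in>{1..n}. (j(l := j l - 1)) x) = k - 1"
    using sum_fun_upd[OF fin l_in, of "\<lambda>x y. y" j "j l - 1"] sums jl by simp
  moreover have "(\<Sum>x\<in>{1..n}. x * (j(l := j l - 1)) x) = n - l"
    using sum_fun_upd[OF fin l_in, of "\<lambda>x y. x * y" j "j l - 1"] sums jl
    by (simp add: right_diff_distrib')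
  moreover have "\<forall>x. x \<notin> {1..n} \<longrightarrow> (j(l := j l - 1)) x = 0"
    using supp l_in by auto
  ultimately show ?thesis using mem_bell_tuples_iff by blast
qed

lemma bell_denom_fun_upd_pred:
  assumes l: "l \<in> {1..N}" and jl: "j l \<noteq> 0"
  shows "bell_denom N j = bell_denom N (j(l := j l - 1)) * (j l * fact l)"
proof -
  define X :: nat where "X = fact (j l - 1) * fact l ^ (j l - 1)"
  have "fact (j l) * fact l ^ j l = (j l * fact l) * X"
    using jl by (cases "j l") (auto simp: X_def algebra_simps)
  then have "bell_denom N (j(l := j l - 1)) * (j l * fact l) * X = bell_denom N j * X"
    using bell_denom_fun_upd[OF l, of j "j l - 1"] by (simp add: X_def mult.assoc)
  moreover have "X \<noteq> 0" by (simp add: X_def)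
  ultimately show ?thesis by simp
qed

text \<open>\<open>Y\<^sub>n\<^sub>,\<^sub>k(1, 1, \<dots>)\<close>, i.e.\ the Stirling number of the second kind.\<close>
definition bell_ones :: "nat \<Rightarrow> nat \<Rightarrow> nat" where
  "bell_ones n k = (\<Sum>j\<in>bell_tuples n k. fact n div bell_denom n j)"

lemma of_nat_bell_ones:
  "(of_nat (bell_ones n k) :: rat) = (\<Sum>j\<in>bell_tuples n k. fact n / of_nat (bell_denom n j))"
  unfolding bell_ones_def of_nat_sum
  by (intro sum.cong refl) (simp add: of_nat_of_nat_div bell_denom_dvd_fact)

lemma bell_ones_0: "bell_ones n 0 = (if n = 0 then 1 else 0)"
  by (simp add: bell_ones_def bell_tuples_0 bell_denom_def)

lemma bell_ones_eq_0: "n < k \<Longrightarrow> bell_ones n k = 0"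
  by (simp add: bell_ones_def bell_tuples_eq_empty)

lemma bell_ones_summand_shift:
  assumes l: "l \<in> {1..Suc n}"
  shows "of_nat (n choose (l - 1)) * (\<Sum>j\<in>bell_tuples (Suc n - l) k. fact (Suc n - l) / of_nat (bell_denom (Suc n - l) j) :: rat)
       = (\<Sum>j\<in>bell_tuples (Suc n) (Suc k). of_nat (l * j l) * fact n / of_nat (bell_denom (Suc n) j))"
    (is "_ * (\<Sum>j\<in>?T. ?f j) = (\<Sum>j\<in>_. ?g j)")
proof -
  define S where "S = {j\<in>bell_tuples (Suc n) (Suc k). j l \<noteq> 0}"
  define inc where "inc = (\<lambda>j::nat\<Rightarrow>nat. j(l := Suc (j l)))"
  define dec where "dec = (\<lambda>j::nat\<Rightarrow>nat. j(l := j l - 1))"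
  have inc_mem: "inc j \<in> S" if "j \<in> ?T" for j
  proof -
    have "inc j \<in> bell_tuples (Suc n - l + l) (Suc k)"
      unfolding inc_def by (rule bell_tuples_fun_upd_Suc) (use l that in auto)
    moreover have "Suc n - l + l = Suc n" using l by simp
    ultimately show ?thesis by (simp add: S_def inc_def)
  qed
  have dec_mem: "dec j \<in> ?T" if "j \<in> S" for j
    using bell_tuples_fun_upd_pred[of j "Suc n" "Suc k" l] that unfolding S_def dec_def by simp
  have summand: "of_nat (n choose (l - 1)) * ?f (dec j) = ?g j" if j: "j \<in> S" for j
  proof -
    have jl: "j l \<noteq> 0" using j by (simp add: S_def)
    have "bell_denom (Suc n - l) (dec j) = bell_denom (Suc n) (dec j)"
      using bell_tuples_support[OF dec_mem[OF j]] by (intro bell_denom_indep_of_range) auto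
    moreover have "bell_denom (Suc n) j = bell_denom (Suc n) (dec j) * (j l * (l * fact (l - 1)))"
      using bell_denom_fun_upd_pred[of l "Suc n" j] l jl fact_reduce[of l, where 'a = nat] by (simp add: dec_def)
    moreover have "fact (l - 1) * fact (Suc n - l) * of_nat (n choose (l - 1)) = (fact n :: rat)"
    proof -
      have "fact (l - 1) * fact (n - (l - 1)) * (n choose (l - 1)) = fact n"
        by (rule binomial_fact_lemma) (use l in auto)
      moreover have "n - (l - 1) = Suc n - l" using l by auto
      ultimately have "fact (l - 1) * fact (Suc n - l) * (n choose (l - 1)) = fact n"
        by (simp only:)
      from arg_cong[OF this, of "of_nat :: nat \<Rightarrow> rat"] show ?thesis by simp
    qed
    moreover have "bell_denom (Suc n) (dec j) \<noteq> 0" using bell_denom_pos[of "Suc n" "dec j"] by simp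
    ultimately show ?thesis
      using l jl by (simp add: field_simps)
  qed
  have dec_inc: "dec (inc j) = j" for j
    by (simp add: inc_def dec_def)
  have "of_nat (n choose (l - 1)) * (\<Sum>j\<in>?T. ?f j) = (\<Sum>j\<in>S. of_nat (n choose (l - 1)) * ?f (dec j))"
    unfolding sum_distrib_left
  proof (rule sum.reindex_bij_witness[where i = dec and j = inc])
    show "inc (dec j) = j" if "j \<in> S" for j
      using that by (auto simp: inc_def dec_def S_def)
  qed (simp_all add: dec_inc inc_mem dec_mem)
  also have "\<dots> = (\<Sum>j\<in>S. ?g j)"
    by (rule sum.cong[OF refl summand])
  also have "\<dots> = (\<Sum>j\<in>bell_tuples (Suc n) (Suc k). ?g j)"
    by (rule sum.mono_neutral_left) (auto simp: S_def finite_bell_tuples)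
  finally show ?thesis .
qed

text \<open>The Stirling recurrence by the size \<open>l\<close> of the block containing the first element;
  on multiplicity vectors it comes from \<open>\<Sum>\<^sub>l l j\<^sub>l = n + 1\<close>.\<close>
lemma bell_ones_Suc_Suc: "bell_ones (Suc n) (Suc k) = (\<Sum>i\<le>n. (n choose i) * bell_ones (n - i) k)"
proof -
  have "(of_nat (\<Sum>i\<le>n. (n choose i) * bell_ones (n - i) k) :: rat)
      = (\<Sum>l\<in>{1..Suc n}. of_nat (n choose (l - 1)) *
          (\<Sum>j\<in>bell_tuples (Suc n - l) k. fact (Suc n - l) / of_nat (bell_denom (Suc n - l) j)))"
    by (simp add: of_nat_bell_ones atMost_atLeast0 sum.shift_bounds_cl_Suc_ivl del: sum.cl_ivl_Suc)
  also have "\<dots> = (\<Sum>l\<in>{1..Suc n}. \<Sum>j\<in>bell_tuples (Suc n) (Suc k).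
      of_nat (l * j l) * fact n / of_nat (bell_denom (Suc n) j))"
    by (rule sum.cong[OF refl bell_ones_summand_shift])
  also have "\<dots> = (\<Sum>j\<in>bell_tuples (Suc n) (Suc k).
      of_nat (\<Sum>l\<in>{1..Suc n}. l * j l) * fact n / of_nat (bell_denom (Suc n) j))"
    by (subst sum.swap) (simp only: of_nat_sum sum_distrib_right sum_divide_distrib)
  also have "\<dots> = (\<Sum>j\<in>bell_tuples (Suc n) (Suc k). fact (Suc n) / of_nat (bell_denom (Suc n) j))"
    by (intro sum.cong refl) (simp add: bell_tuples_def fact_Suc)
  also have "\<dots> = of_nat (bell_ones (Suc n) (Suc k))"
    by (simp add: of_nat_bell_ones)
  finally show ?thesis by (simp only: of_nat_eq_iff)
qed

lemma falling_Suc_shift: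
  "(\<Prod>i<Suc k. z - of_nat i) = z * (\<Prod>i<k. (z - 1) - of_nat i :: 'a::comm_ring_1)"
  by (simp add: prod.lessThan_Suc_shift del: prod.lessThan_Suc) (simp add: algebra_simps)

text \<open>By the recurrence \<open>bell_ones_Suc_Suc\<close> and the binomial theorem, \<open>z\<^bsup>n+1\<^esup> = z (1 + (z - 1))\<^sup>n\<close>.\<close>
lemma sum_bell_ones_falling:
  "(\<Sum>k\<le>n. of_nat (bell_ones n k) * (\<Prod>i<k. z - of_nat i)) = (z :: 'a::comm_ring_1) ^ n"
proof (induction n arbitrary: z rule: less_induct)
  case (less n)
  show ?case
  proof (cases n)
    case 0
    then show ?thesis by (simp add: bell_ones_0)
  next
    case (Suc m)
    have IH: "(\<Sum>k\<le>m. of_nat (bell_ones (m - i) k) * (\<Prod>i<k. (z - 1) - of_nat i)) = (z - 1) ^ (m - i)"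
      if "i \<le> m" for i
    proof -
      have "(\<Sum>k\<le>m. of_nat (bell_ones (m - i) k) * (\<Prod>i<k. (z - 1) - of_nat i))
          = (\<Sum>k\<le>m - i. of_nat (bell_ones (m - i) k) * (\<Prod>i<k. (z - 1) - of_nat i))"
        by (rule sum.mono_neutral_right) (auto simp: bell_ones_eq_0)
      also have "\<dots> = (z - 1) ^ (m - i)" by (rule less.IH) (use Suc in auto)
      finally show ?thesis .
    qed
    have "(\<Sum>k\<le>Suc m. of_nat (bell_ones (Suc m) k) * (\<Prod>i<k. z - of_nat i))
        = (\<Sum>k\<le>m. of_nat (bell_ones (Suc m) (Suc k)) * (\<Prod>i<Suc k. z - of_nat i))"
      unfolding sum.atMost_Suc_shift by (simp add: bell_ones_0 del: prod.lessThan_Suc)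
    also have "\<dots> = (\<Sum>k\<le>m. \<Sum>i\<le>m. z * (of_nat (m choose i) * (of_nat (bell_ones (m - i) k) * (\<Prod>i<k. (z - 1) - of_nat i))))"
      by (simp add: bell_ones_Suc_Suc falling_Suc_shift sum_distrib_left sum_distrib_right mult_ac
               del: prod.lessThan_Suc)
    also have "\<dots> = z * (\<Sum>i\<le>m. of_nat (m choose i) * (\<Sum>k\<le>m. of_nat (bell_ones (m - i) k) * (\<Prod>i<k. (z - 1) - of_nat i)))"
      by (subst sum.swap) (simp only: sum_distrib_left)
    also have "\<dots> = z * (\<Sum>i\<le>m. of_nat (m choose i) * (z - 1) ^ (m - i))"
      by (simp add: IH)
    also have "\<dots> = z * (1 + (z - 1)) ^ m"
      using binomial_ring[of 1 "z - 1" m] by simp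
    finally show ?thesis using Suc by simp
  qed
qed

lemma partial_bell_bseq_1: "partial_bell n k (bseq 1) = of_nat (bell_ones n k)"
  unfolding partial_bell_def bell_ones_def of_nat_sum bell_denom_def
  by (intro sum.cong refl) (simp add: bseq_def)

lemma hurwitz_pow_bseq_1: "hurwitz_pow (bseq 1) z n = (z :: 'a::comm_ring_1) ^ n"
  unfolding hurwitz_pow_def partial_bell_bseq_1 by (rule sum_bell_ones_falling)

lemma partial_bell_0: "partial_bell n 0 y = (if n = 0 then 1 else 0)"
  by (simp add: partial_bell_def bell_tuples_0)

text \<open>For \<open>i \<ge> 2\<close> only the tuple with \<open>j\<^sub>i = k\<close> avoids the zero entries of \<open>bseq i\<close>.\<close>
lemma partial_bell_bseq:
  assumes i: "i \<ge> 2" and k: "k \<noteq> 0"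
  shows "partial_bell n k (bseq i :: nat \<Rightarrow> 'a::comm_ring_1) =
    (if n = i * k then of_nat (fact n div (fact k * fact i ^ k)) else 0)"
proof -
  define e where "e = (\<lambda>l::nat. if l = i then k else 0)"
  define F where "F = (\<lambda>j. of_nat (fact n div (\<Prod>l\<in>{1..n}. fact (j l) * fact l ^ j l)) *
      (\<Prod>l\<in>{1..n}. (bseq i l :: 'a) ^ j l))"
  have F_zero: "F j = 0" if j: "j \<in> bell_tuples n k" and "j \<noteq> e" for j
  proof -
    have "\<exists>l\<in>{1..n}. l \<noteq> i \<and> j l \<noteq> 0"
    proof (rule ccontr)
      assume "\<not> ?thesis"
      then have z: "j l = 0" if "l \<noteq> i" for l
        using bell_tuples_support[OF j, of l] that by blast
      have "(\<Sum>l\<in>{1..n}. j l) = (\<Sum>l\<in>{1..n}. if l = i then j i else 0)"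
        by (intro sum.cong refl) (use z in auto)
      then have "j i = k" using j k by (auto simp: bell_tuples_def split: if_splits)
      then have "j = e" using z by (auto simp: e_def fun_eq_iff)
      then show False using \<open>j \<noteq> e\<close> by contradiction
    qed
    then obtain l where l: "l \<in> {1..n}" "l \<noteq> i" "j l \<noteq> 0" by blast
    then have "(\<Prod>l\<in>{1..n}. (bseq i l :: 'a) ^ j l) = 0"
      using i by (intro prod_zero bexI[of _ l]) (auto simp: bseq_def zero_power)
    then show ?thesis by (simp add: F_def)
  qed
  have e_mem: "e \<in> bell_tuples n k \<longleftrightarrow> n = i * k"
  proof -
    have "(\<forall>l. l \<notin> {1..n} \<longrightarrow> e l = 0) \<longleftrightarrow> i \<in> {1..n}" using k by (auto simp: e_def)
    moreover have "(\<Sum>l\<in>{1..n}. l * e l) = (if i \<in> {1..n} then i * k else 0)"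
      unfolding e_def by (simp add: if_distrib cong: if_cong)
    moreover have "(\<Sum>l\<in>{1..n}. e l) = (if i \<in> {1..n} then k else 0)" by (simp add: e_def)
    ultimately show ?thesis using i k unfolding bell_tuples_def by auto
  qed
  have F_e: "F e = of_nat (fact n div (fact k * fact i ^ k))" if "n = i * k"
  proof -
    have "i \<in> {1..n}" using that i k by simp
    then have "(\<Prod>l\<in>{1..n}. fact (e l) * fact l ^ e l) = (fact k * fact i ^ k :: nat)"
      by (subst prod.cong[OF refl, of _ _ "\<lambda>l. if l = i then fact k * fact i ^ k else 1"])
         (auto simp: e_def)
    moreover have "(\<Prod>l\<in>{1..n}. (bseq i l :: 'a) ^ e l) = 1"
      by (intro prod.neutral) (simp add: e_def bseq_def)
    ultimately show ?thesis by (simp add: F_def)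
  qed
  have "partial_bell n k (bseq i :: nat \<Rightarrow> 'a) = (\<Sum>j\<in>bell_tuples n k. if j = e then F e else 0)"
    unfolding partial_bell_def F_def[symmetric] by (intro sum.cong refl) (use F_zero in auto)
  also have "\<dots> = (if n = i * k then F e else 0)"
    by (simp add: finite_bell_tuples e_mem)
  finally show ?thesis by (simp add: F_e)
qed

lemma coeff_of_nat_poly: "coeff (of_nat k :: 'a::comm_semiring_1 poly) n = (if n = 0 then of_nat k else 0)"
  by (simp add: of_nat_poly coeff_pCons split: nat.split)

lemma coeff_falling_0:
  assumes "coeff p 0 = 0"
  shows "coeff (\<Prod>i<k. p - of_nat i :: 'a::comm_ring_1 poly) 0 = (if k = 0 then 1 else 0)"
  by (induction k) (simp_all add: coeff_mult_0 coeff_of_nat_poly assms)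

lemma coeff_falling_1:
  assumes "coeff p 0 = 0"
  shows "coeff (\<Prod>i<k. p - of_nat i :: 'a::comm_ring_1 poly) 1 =
    (if k = 0 then 0 else (-1) ^ (k - 1) * of_nat (fact (k - 1)) * coeff p 1)"
proof (induction k)
  case 0
  then show ?case by simp
next
  case (Suc k)
  have "coeff (\<Prod>i<Suc k. p - of_nat i) 1 =
      coeff (\<Prod>i<k. p - of_nat i) 0 * coeff p 1 - coeff (\<Prod>i<k. p - of_nat i) 1 * of_nat k"
    by (simp add: coeff_mult_1 coeff_of_nat_poly assms del: One_nat_def)
  then show ?case
    using Suc.IH coeff_falling_0[OF assms, of k] by (cases k) (simp_all add: algebra_simps)
qed

lemma coeff_hurwitz_pow_0:
  assumes "coeff p 0 = 0"
  shows "coeff (hurwitz_pow a p n :: 'a::comm_ring_1 poly) 0 = hurwitz_one n"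
proof -
  have "coeff (hurwitz_pow a p n) 0 = (\<Sum>k\<le>n. if k = 0 then coeff (partial_bell n 0 a) 0 else 0)"
    unfolding hurwitz_pow_def coeff_sum
    by (intro sum.cong refl) (simp add: coeff_mult_0 coeff_falling_0[OF assms])
  also have "\<dots> = hurwitz_one n"
    by (simp add: partial_bell_0 hurwitz_one_def)
  finally show ?thesis .
qed

lemma coeff_hurwitz_pow_1:
  assumes "coeff p 0 = 0"
  shows "coeff (hurwitz_pow a p n :: 'a::comm_ring_1 poly) 1 =
    (\<Sum>k\<in>{1..n}. coeff (partial_bell n k a) 0 * ((-1) ^ (k - 1) * of_nat (fact (k - 1)))) * coeff p 1"
proof -
  have "coeff (hurwitz_pow a p n) 1 =
      (\<Sum>k\<le>n. if k = 0 then 0 else coeff (partial_bell n k a) 0 * ((-1) ^ (k - 1) * of_nat (fact (k - 1))) * coeff p 1)"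
    unfolding hurwitz_pow_def coeff_sum
    by (intro sum.cong refl)
       (simp add: coeff_mult_1 coeff_falling_0[OF assms] coeff_falling_1[OF assms] partial_bell_0 mult_ac
             del: One_nat_def)
  also have "\<dots> = (\<Sum>k\<in>{1..n}. coeff (partial_bell n k a) 0 * ((-1) ^ (k - 1) * of_nat (fact (k - 1))) * coeff p 1)"
    by (rule sum.mono_neutral_cong_right) auto
  finally show ?thesis by (simp add: sum_distrib_right)
qed

lemma coeff_power_1: "coeff (p ^ n) 1 = of_nat n * coeff p 0 ^ (n - 1) * coeff (p :: 'a::comm_ring_1 poly) 1"
proof (induction n)
  case 0
  then show ?case by simp
next
  case (Suc n)
  then show ?case
    by (cases n) (simp_all add: coeff_mult_1 coeff_mult_0 coeff_0_power algebra_simps del: One_nat_def)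
qed

lemma coeff_hurwitz_pow_bseq_one_1:
  assumes "coeff p 0 = 0"
  shows "coeff (hurwitz_pow (bseq 1) p n :: 'a::comm_ring_1 poly) 1 = (if n = 1 then coeff p 1 else 0)"
  unfolding hurwitz_pow_bseq_1 coeff_power_1 assms by (cases n) (simp_all add: zero_power)

lemma fact_div_mult_fact_pred:
  assumes "i \<ge> 1" and "k \<ge> 1"
  shows "fact (i * k) div (fact k * fact i ^ k) * fact (k - 1) = (fact (i * k) div (k * fact i ^ k) :: nat)"
proof -
  obtain Q where Q: "fact (i * k) = fact k * fact i ^ k * (Q :: nat)"
    using fact_mult_pow_dvd_fact[OF assms(1), of k] by (auto simp: mult.commute elim!: dvdE)
  have "fact k = k * (fact (k - 1) :: nat)" using assms(2) by (cases k) auto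
  then have "fact (i * k) = (k * fact i ^ k) * (fact (k - 1) * Q)" unfolding Q by (simp add: mult_ac)
  then have "fact (i * k) div (k * fact i ^ k) = fact (k - 1) * Q" using assms(2) by simp
  moreover have "fact (i * k) div (fact k * fact i ^ k) = Q" unfolding Q by simp
  ultimately show ?thesis by simp
qed

lemma coeff_hurwitz_pow_bseq_1:
  assumes i: "i \<ge> 2" and p: "coeff p 0 = 0"
  shows "coeff (hurwitz_pow (bseq i) p n :: 'a::comm_ring_1 poly) 1 =
    (if i dvd n \<and> n \<noteq> 0
     then (-1) ^ (n div i - 1) * of_nat (fact n div (n div i * fact i ^ (n div i))) * coeff p 1 else 0)"
proof -
  define r where "r = n div i"
  define C :: 'a where "C = (-1) ^ (r - 1) * of_nat (fact n div (r * fact i ^ r))"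
  let ?t = "\<lambda>k. coeff (partial_bell n k (bseq i)) 0 * ((-1) ^ (k - 1) * of_nat (fact (k - 1)) :: 'a)"
  have t: "?t k = (if k = r \<and> i dvd n then C else 0)" if k: "k \<in> {1..n}" for k
  proof (cases "n = i * k")
    case True
    then have "r = k" using i by (simp add: r_def)
    have "?t k = (-1) ^ (k - 1) * of_nat (fact n div (fact k * fact i ^ k) * fact (k - 1))"
      using True k partial_bell_bseq[OF i, of k n, where 'a = "'a poly"] by (simp add: coeff_of_nat_poly mult_ac)
    also have "fact n div (fact k * fact i ^ k) * fact (k - 1) = fact n div (k * fact i ^ k)"
      using fact_div_mult_fact_pred[of i k] True i k by simp
    finally show ?thesis using True \<open>r = k\<close> by (simp add: C_def)
  next
    case False
    then have "\<not> (k = r \<and> i dvd n)" using i by (auto simp: r_def)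
    then show ?thesis
      using False k partial_bell_bseq[OF i, of k n, where 'a = "'a poly"] by auto
  qed
  have "(\<Sum>k\<in>{1..n}. ?t k) = (\<Sum>k\<in>{1..n}. if k = r \<and> i dvd n then C else 0)"
    by (rule sum.cong[OF refl t])
  also have "\<dots> = (if i dvd n \<and> n \<noteq> 0 then C else 0)"
  proof (cases "i dvd n \<and> n \<noteq> 0")
    case True
    then have "r \<in> {1..n}" using i by (auto simp: r_def div_le_dividend elim!: dvdE)
    then show ?thesis using True by simp
  next
    case False
    then show ?thesis by auto
  qed
  finally show ?thesis
    unfolding coeff_hurwitz_pow_1[OF p] by (simp add: C_def r_def)
qed

lemma coeff_tau_1:
  assumes "\<And>i. coeff (z i) 0 = 0"
  shows "coeff (tau z m) 1 = (\<Sum>i\<in>{1..max 1 m}. coeff (hurwitz_pow (bseq i) (z (i - 1)) m) 1)"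
proof -
  define fs where "fs = map (\<lambda>i. hurwitz_pow (bseq i) (z (i - 1))) [1..<max 1 m + 1]"
  have "coeff (a n) 0 = hurwitz_one n" if "a \<in> set fs" for a n
    using that assms by (auto simp: fs_def coeff_hurwitz_pow_0)
  then have "coeff (tau z m) 1 = (\<Sum>a\<leftarrow>fs. coeff (a m) 1)"
    unfolding tau_def tau_partial_def fs_def[symmetric] by (rule hurwitz_prod_list_coeff_1)
  also have "\<dots> = (\<Sum>i\<leftarrow>[1..<max 1 m + 1]. coeff (hurwitz_pow (bseq i) (z (i - 1)) m) 1)"
    by (simp add: fs_def comp_def)
  also have "\<dots> = (\<Sum>i\<in>{1..max 1 m}. coeff (hurwitz_pow (bseq i) (z (i - 1)) m) 1)"
    by (simp only: interv_sum_list_conv_sum_set_nat set_upt Suc_eq_plus1[symmetric]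
        atLeastLessThanSuc_atLeastAtMost)
  finally show ?thesis .
qed

lemma coeff_xseq: "coeff (xseq u n) 0 = 0" "coeff (xseq u n) 1 = u n"
  by (simp_all add: xseq_def)

lemma coeff_tau_xseq_one_1: "coeff (tau (xseq u) 1) 1 = u 0"
  by (simp add: coeff_tau_1 coeff_xseq coeff_hurwitz_pow_bseq_one_1 del: One_nat_def)

lemma divisors_ge_2_eq:
  "(m :: nat) \<ge> 2 \<Longrightarrow> {k\<in>{2..m}. k dvd m} = insert m {k. k dvd m \<and> k \<noteq> 1 \<and> k \<noteq> m}"
  by (auto dest: dvd_imp_le intro: Nat.gr0I)

lemma coeff_tau_xseq_1:
  fixes u :: "nat \<Rightarrow> 'a::comm_ring_1"
  assumes m: "m \<ge> 2"
  shows "coeff (tau (xseq u) m) 1 = u (m - 1) -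
    (\<Sum>k\<in>{k. k dvd m \<and> k \<noteq> 1 \<and> k \<noteq> m}.
       (-1) ^ (m div k) * of_nat (fact m div ((m div k) * fact k ^ (m div k))) * u (k - 1))"
proof -
  define K where "K = {k. k dvd m \<and> k \<noteq> 1 \<and> k \<noteq> m}"
  define H where "H = (\<lambda>k. (-1) ^ (m div k - 1) * of_nat (fact m div (m div k * fact k ^ (m div k))) * u (k - 1))"
  have divisors: "{k\<in>{2..m}. k dvd m} = insert m K"
    unfolding K_def using m by (rule divisors_ge_2_eq)
  have "finite K" using finite_subset[of K "{k\<in>{2..m}. k dvd m}"] divisors by auto
  have "coeff (tau (xseq u) m) 1 = (\<Sum>k\<in>{1..m}. coeff (hurwitz_pow (bseq k) (xseq u (k - 1)) m) 1)"
    unfolding coeff_tau_1[OF coeff_xseq(1)] using m by (simp add: max_absorb2)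
  also have "\<dots> = coeff (hurwitz_pow (bseq 1) (xseq u 0) m) 1 +
      (\<Sum>k\<in>{2..m}. coeff (hurwitz_pow (bseq k) (xseq u (k - 1)) m) 1)"
    using m by (simp add: sum.atLeast_Suc_atMost numeral_2_eq_2 del: One_nat_def)
  also have "coeff (hurwitz_pow (bseq 1) (xseq u 0) m) 1 = 0"
    using m by (simp add: coeff_hurwitz_pow_bseq_one_1 coeff_xseq del: One_nat_def)
  also have "(\<Sum>k\<in>{2..m}. coeff (hurwitz_pow (bseq k) (xseq u (k - 1)) m) 1) =
      (\<Sum>k\<in>{2..m}. if k dvd m then H k else 0)"
    using m by (intro sum.cong refl) (simp add: coeff_hurwitz_pow_bseq_1 coeff_xseq H_def del: One_nat_def)
  also have "0 + \<dots> = (\<Sum>k\<in>insert m K. H k)"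
    unfolding add_0_left divisors[symmetric] by (rule sum.inter_filter[symmetric]) simp
  also have "\<dots> = u (m - 1) + (\<Sum>k\<in>K. H k)"
    using \<open>finite K\<close> m by (simp add: K_def H_def)
  also have "(\<Sum>k\<in>K. H k) = - (\<Sum>k\<in>K. (-1) ^ (m div k) * of_nat (fact m div ((m div k) * fact k ^ (m div k))) * u (k - 1))"
  proof -
    have "H k = - ((-1) ^ (m div k) * of_nat (fact m div ((m div k) * fact k ^ (m div k))) * u (k - 1))"
      if "k \<in> K" for k
    proof -
      have "k dvd m" using that by (simp add: K_def)
      moreover have "k \<noteq> 0" using \<open>k dvd m\<close> m by (cases "k = 0") auto
      ultimately have "k \<le> m" "k \<noteq> 0" using m by (auto intro: dvd_imp_le)
      then have "m div k \<noteq> 0" by (simp add: div_greater_zero_iff)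
      then obtain j where "m div k = Suc j" using not0_implies_Suc by blast
      then show ?thesis by (simp add: H_def)
    qed
    then show ?thesis by (simp add: sum_negf)
  qed
  finally show ?thesis by (simp add: K_def)
qed

theorem mainTheorem11:
  fixes u :: "nat \<Rightarrow> 'a::comm_ring_1"
    and q :: "nat \<Rightarrow> 'a poly"
  assumes q_def: "q = tau (xseq u)"
  shows "u 0 = coeff (q 1) 1
    \<and> (\<forall>m\<ge>2. u (m - 1) = coeff (q m) 1 +
          (\<Sum>k\<in>{k. k dvd m \<and> k \<noteq> 1 \<and> k \<noteq> m}.
             (- 1) ^ (m div k) * of_nat (fact m div ((m div k) * fact k ^ (m div k))) * u (k - 1)))
    \<and> (\<forall>p::nat. prime p \<longrightarrow> u (p - 1) = coeff (q p) 1)"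
proof -
  have m_ge_2: "u (m - 1) = coeff (q m) 1 +
      (\<Sum>k\<in>{k. k dvd m \<and> k \<noteq> 1 \<and> k \<noteq> m}.
         (- 1) ^ (m div k) * of_nat (fact m div ((m div k) * fact k ^ (m div k))) * u (k - 1))"
    if "m \<ge> 2" for m
    using coeff_tau_xseq_1[OF that, of u] by (simp add: q_def)
  have "u (p - 1) = coeff (q p) 1" if p: "prime p" for p :: nat
  proof -
    have no_divisors: "{k. k dvd p \<and> k \<noteq> 1 \<and> k \<noteq> p} = {}" using p by (auto simp: prime_nat_iff)
    show ?thesis using m_ge_2[OF prime_ge_2_nat[OF p]] unfolding no_divisors by simp
  qed
  then show ?thesis
    using m_ge_2 coeff_tau_xseq_one_1[of u] by (simp add: q_def)
qed

end
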